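(* Let $n\ge1$. Let $A=\begin{pmatrix}b&0&0\\1&0&k\\0&1&t\end{pmatrix}$, $G_1=(b(2b-t),\,2b-t,\,2)^T$, $G_{n+1}=A^nG_1$ in $\mathbb{C}[b,t,k]$ ($\deg b=\deg t=1,\deg k=2$), and let $E=\begin{pmatrix}b&2q&2q\\1&r_1-b&0\\1&0&r_2-b\end{pmatrix}$, $R_1=(b,1,1)^T$, $R_{n+1}=E^nR_1$ in $\mathbb{C}[b,q,r_1,r_2]$ ($\deg b=\deg r_1=\deg r_2=1$, $\deg q=2$). Then $b\mapsto b$, $t\mapsto r_1+r_2-2b$, $k\mapsto 4q-(b-r_1)(b-r_2)$ defines a morphism of graded $\mathbb{C}$-algebras $$\mathbb{C}[b,t,k]/(G_{n+1})\longrightarrow\mathbb{C}[b,q,r_1,r_2]/\big(q(r_1+r_2-4b),R_{n+1}\big),$$ and this morphism is injective in degrees $\le n+2$.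
   Context: Here $(G_{n+1})$ and $(R_{n+1})$ denote the ideals generated by the three entries of the respective column vectors. *)

theory Defs
  imports Complex_Main "HOL-Library.Poly_Mapping"
begin

type_synonym ('v, 'a) mpoly = "('v \<Rightarrow>\<^sub>0 nat) \<Rightarrow>\<^sub>0 'a"

definition Var :: "'v \<Rightarrow> ('v, 'a::comm_semiring_1) mpoly" where
  "Var v = Poly_Mapping.single (Poly_Mapping.single v 1) 1"

definition Cst :: "'a::comm_semiring_1 \<Rightarrow> ('v, 'a) mpoly" where
  "Cst c = Poly_Mapping.single 0 c"

definition subst :: "('v \<Rightarrow> ('w, 'a::comm_semiring_1) mpoly) \<Rightarrow> ('v, 'a) mpoly \<Rightarrow> ('w, 'a) mpoly" where
  "subst s f = (\<Sum>mon\<in>Poly_Mapping.keys f. Cst (Poly_Mapping.lookup f mon) * (\<Prod>v\<in>Poly_Mapping.keys (mon::'v \<Rightarrow>\<^sub>0 nat). s v ^ Poly_Mapping.lookup mon v))"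

definition wdeg :: "('v \<Rightarrow> nat) \<Rightarrow> ('v \<Rightarrow>\<^sub>0 nat) \<Rightarrow> nat" where
  "wdeg w m = (\<Sum>v\<in>Poly_Mapping.keys m. w v * Poly_Mapping.lookup m v)"

text \<open>f is homogeneous of (weighted) degree d (the zero polynomial is homogeneous of every degree).\<close>
definition homogeneous :: "('v \<Rightarrow> nat) \<Rightarrow> nat \<Rightarrow> ('v, 'a::zero) mpoly \<Rightarrow> bool" where
  "homogeneous w d f \<longleftrightarrow> (\<forall>m\<in>Poly_Mapping.keys f. wdeg w m = d)"

definition ideal_gen :: "'a::comm_ring_1 list \<Rightarrow> 'a set" where
  "ideal_gen xs = {\<Sum>i<length xs. c i * xs ! i | c. True}"

datatype V1 = vb | vt | vk

fun w1 :: "V1 \<Rightarrow> nat" where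
  "w1 vb = 1" | "w1 vt = 1" | "w1 vk = 2"

datatype V2 = ub | uq | ur1 | ur2

fun w2 :: "V2 \<Rightarrow> nat" where
  "w2 ub = 1" | "w2 uq = 2" | "w2 ur1 = 1" | "w2 ur2 = 1"

type_synonym P1 = "(V1, complex) mpoly"
type_synonym P2 = "(V2, complex) mpoly"

text \<open>Column vectors of length 3 as triples; multiplication by the matrix
  A = ((b,0,0),(1,0,k),(0,1,t)).\<close>
definition Amul :: "P1 \<times> P1 \<times> P1 \<Rightarrow> P1 \<times> P1 \<times> P1" where
  "Amul = (\<lambda>(x, y, z). (Var vb * x, x + Var vk * z, y + Var vt * z))"

definition G1 :: "P1 \<times> P1 \<times> P1" where
  "G1 = (Var vb * (Cst 2 * Var vb - Var vt), Cst 2 * Var vb - Var vt, Cst 2)"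

definition G :: "nat \<Rightarrow> P1 \<times> P1 \<times> P1" where
  "G j = (Amul ^^ (j - 1)) G1"

text \<open>Multiplication by E = ((b,2q,2q),(1,r1-b,0),(1,0,r2-b)).\<close>
definition Emul :: "P2 \<times> P2 \<times> P2 \<Rightarrow> P2 \<times> P2 \<times> P2" where
  "Emul = (\<lambda>(x, y, z).
     (Var ub * x + Cst 2 * Var uq * y + Cst 2 * Var uq * z,
      x + (Var ur1 - Var ub) * y,
      x + (Var ur2 - Var ub) * z))"

definition R1 :: "P2 \<times> P2 \<times> P2" where
  "R1 = (Var ub, 1, 1)"

definition R :: "nat \<Rightarrow> P2 \<times> P2 \<times> P2" where
  "R j = (Emul ^^ (j - 1)) R1"

definition entries :: "'a \<times> 'a \<times> 'a \<Rightarrow> 'a list" where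
  "entries = (\<lambda>(x, y, z). [x, y, z])"

fun phi_img :: "V1 \<Rightarrow> P2" where
  "phi_img vb = Var ub"
| "phi_img vt = Var ur1 + Var ur2 - Cst 2 * Var ub"
| "phi_img vk = Cst 4 * Var uq - (Var ub - Var ur1) * (Var ub - Var ur2)"

definition phi :: "P1 \<Rightarrow> P2" where
  "phi = subst phi_img"

definition JG :: "nat \<Rightarrow> P1 set" where
  "JG n = ideal_gen (entries (G (n + 1)))"

definition IR :: "nat \<Rightarrow> P2 set" where
  "IR n = ideal_gen (Var uq * (Var ur1 + Var ur2 - Cst 4 * Var ub) # entries (R (n + 1)))"

end

theory Submission
  imports Defs
begin

(* Modulo q s, where s = r1 + r2 - 4 b, the images under phi of the entries of G_{n+1} are explicit
   combinations of the entries x, y, z of R_{n+1}; this gives the morphism.  Conversely, let f be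
   homogeneous of degree d <= n + 2 with phi f = q s K + x alpha + y beta1 + z beta2.  The swap
   r1 <-> r2 fixes phi f and x and exchanges y and z, so the coefficients may be symmetrised; they
   have degree at most 2, and an explicit element F of (G_{n+1}) then reduces phi (4 f - F) to
   a b^i x + c q (y + z) modulo q s.  Setting q = 0, which makes phi injective, gives
   4 f - F = a b^(n+1+i); dividing by q and evaluating at two points of s = 0 gives two linear
   relations between a and c, which force a = 0 unless n = 1, where b^3 lies in (G_2) anyway. *)

section \<open>Substitution homomorphisms\<close>

lemma Cst_add: "Cst (a + b) = Cst a + Cst b"
  by (simp add: Cst_def single_add)

lemma Cst_mult: "Cst (a * b) = Cst a * Cst b"
  by (simp add: Cst_def mult_single)

lemma Cst_diff: "Cst (a - b) = Cst a - (Cst b :: ('v, 'a::comm_ring_1) mpoly)"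
  by (simp add: Cst_def single_diff)

lemma Cst_uminus: "Cst (- a) = - (Cst a :: ('v, 'a::comm_ring_1) mpoly)"
  by (simp add: Cst_def single_uminus)

lemma Cst_0 [simp]: "Cst 0 = 0"
  by (simp add: Cst_def)

lemma Cst_1 [simp]: "Cst 1 = 1"
  by (simp add: Cst_def)

lemma Cst_numeral [simp]: "Cst (numeral k) = numeral k"
  by (simp add: Cst_def)

lemma Cst_of_nat: "Cst (of_nat k) = of_nat k"
  by (simp add: Cst_def)

lemma Cst_eq_0_iff [simp]: "Cst c = 0 \<longleftrightarrow> c = 0"
  by (metis Cst_def lookup_single_eq single_zero)

lemma Cst_power: "Cst (a ^ k) = Cst a ^ k"
  by (induct k) (simp_all add: Cst_mult)

lemma Var_eq_iff [simp]: "(Var u :: ('v, 'a::comm_semiring_1) mpoly) = Var v \<longleftrightarrow> u = v"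
proof
  assume "(Var u :: ('v, 'a) mpoly) = Var v"
  then have "Poly_Mapping.lookup (Var u :: ('v, 'a) mpoly) (Poly_Mapping.single u 1)
      = Poly_Mapping.lookup (Var v :: ('v, 'a) mpoly) (Poly_Mapping.single u 1)"
    by simp
  then have "Poly_Mapping.single v (1::nat) = Poly_Mapping.single u 1"
    by (simp add: Var_def lookup_single when_def split: if_splits)
  then have "Poly_Mapping.lookup (Poly_Mapping.single v (1::nat)) u = Poly_Mapping.lookup (Poly_Mapping.single u 1) u"
    by simp
  then show "u = v"
    by (simp add: lookup_single when_def split: if_splits)
qed simp

lemma Var_neq_0 [simp]: "(Var v :: ('v, 'a::comm_semiring_1) mpoly) \<noteq> 0"
  by (metis Var_def lookup_single_eq one_neq_zero lookup_zero)

lemma poly_mapping_eq_sum_single: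
  "p = (\<Sum>m\<in>Poly_Mapping.keys p. Poly_Mapping.single m (Poly_Mapping.lookup p m))"
  by (rule poly_mapping_eqI)
     (auto simp: lookup_sum lookup_single when_def in_keys_iff sum.delta)

definition subst_mon :: "('v \<Rightarrow> ('w, 'a::comm_semiring_1) mpoly) \<Rightarrow> ('v \<Rightarrow>\<^sub>0 nat) \<Rightarrow> ('w, 'a) mpoly" where
  "subst_mon s m = (\<Prod>v\<in>Poly_Mapping.keys m. s v ^ Poly_Mapping.lookup m v)"

lemma subst_mon_superset:
  assumes "finite A" "Poly_Mapping.keys m \<subseteq> A"
  shows "subst_mon s m = (\<Prod>v\<in>A. s v ^ Poly_Mapping.lookup m v)"
  unfolding subst_mon_def
  by (rule prod.mono_neutral_left) (use assms in \<open>auto simp: in_keys_iff\<close>)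

lemma subst_mon_add: "subst_mon s (m1 + m2) = subst_mon s m1 * subst_mon s m2"
proof -
  let ?A = "Poly_Mapping.keys m1 \<union> Poly_Mapping.keys m2"
  have "subst_mon s (m1 + m2) = (\<Prod>v\<in>?A. s v ^ Poly_Mapping.lookup (m1 + m2) v)"
    by (rule subst_mon_superset) (auto simp: keys_add)
  also have "\<dots> = (\<Prod>v\<in>?A. s v ^ Poly_Mapping.lookup m1 v) * (\<Prod>v\<in>?A. s v ^ Poly_Mapping.lookup m2 v)"
    by (simp add: lookup_add power_add prod.distrib)
  also have "\<dots> = subst_mon s m1 * subst_mon s m2"
    by (simp add: subst_mon_superset[of ?A m1 s] subst_mon_superset[of ?A m2 s])
  finally show ?thesis .
qed

lemma subst_mon_single: "subst_mon s (Poly_Mapping.single v k) = s v ^ k"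
  by (simp add: subst_mon_def)

lemma subst_eq_sum_superset:
  assumes "finite A" "Poly_Mapping.keys f \<subseteq> A"
  shows "subst s f = (\<Sum>m\<in>A. Cst (Poly_Mapping.lookup f m) * subst_mon s m)"
  unfolding subst_def subst_mon_def[symmetric]
  by (rule sum.mono_neutral_left) (use assms in \<open>auto simp: in_keys_iff\<close>)

lemma subst_0 [simp]: "subst s 0 = 0"
  by (simp add: subst_def)

lemma subst_add [simp]: "subst s (f + g) = subst s f + subst s g"
proof -
  let ?A = "Poly_Mapping.keys f \<union> Poly_Mapping.keys g"
  have "subst s (f + g) = (\<Sum>m\<in>?A. Cst (Poly_Mapping.lookup (f + g) m) * subst_mon s m)"
    by (rule subst_eq_sum_superset) (auto simp: keys_add)
  also have "\<dots> = (\<Sum>m\<in>?A. Cst (Poly_Mapping.lookup f m) * subst_mon s m)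
                 + (\<Sum>m\<in>?A. Cst (Poly_Mapping.lookup g m) * subst_mon s m)"
    by (simp add: lookup_add Cst_add distrib_right sum.distrib)
  also have "\<dots> = subst s f + subst s g"
    by (simp add: subst_eq_sum_superset[of ?A f s] subst_eq_sum_superset[of ?A g s])
  finally show ?thesis .
qed

lemma subst_single: "subst s (Poly_Mapping.single m c) = Cst c * subst_mon s m"
  by (cases "c = 0") (simp_all add: subst_def subst_mon_def)

lemma subst_sum: "subst s (\<Sum>i\<in>I. f i) = (\<Sum>i\<in>I. subst s (f i))"
  by (induct I rule: infinite_finite_induct) simp_all

lemma subst_mult [simp]: "subst s (f * g) = subst s f * subst s g"
proof -
  let ?K1 = "Poly_Mapping.keys f" and ?K2 = "Poly_Mapping.keys g"
  let ?t = "\<lambda>p m. Cst (Poly_Mapping.lookup p m) * subst_mon s m"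
  have "f * g = (\<Sum>m1\<in>?K1. Poly_Mapping.single m1 (Poly_Mapping.lookup f m1))
              * (\<Sum>m2\<in>?K2. Poly_Mapping.single m2 (Poly_Mapping.lookup g m2))"
    using poly_mapping_eq_sum_single[of f] poly_mapping_eq_sum_single[of g] by simp
  also have "\<dots> = (\<Sum>m1\<in>?K1. \<Sum>m2\<in>?K2.
      Poly_Mapping.single (m1 + m2) (Poly_Mapping.lookup f m1 * Poly_Mapping.lookup g m2))"
    by (simp add: sum_product mult_single)
  finally have "subst s (f * g) = (\<Sum>m1\<in>?K1. \<Sum>m2\<in>?K2. ?t f m1 * ?t g m2)"
    by (simp add: subst_sum subst_single subst_mon_add Cst_mult algebra_simps)
  also have "\<dots> = (\<Sum>m1\<in>?K1. ?t f m1) * (\<Sum>m2\<in>?K2. ?t g m2)"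
    by (simp add: sum_product)
  also have "\<dots> = subst s f * subst s g"
    by (simp add: subst_def subst_mon_def)
  finally show ?thesis .
qed

lemma subst_Cst [simp]: "subst s (Cst c) = Cst c"
  using subst_single[of s 0 c] by (simp add: Cst_def subst_mon_def)

lemma subst_1 [simp]: "subst s 1 = 1"
  using subst_Cst[of s 1] by simp

lemma subst_numeral [simp]: "subst s (numeral k) = numeral k"
  using subst_Cst[of s "numeral k"] by simp

lemma subst_Var [simp]: "subst s (Var v) = s v"
  using subst_single[of s "Poly_Mapping.single v 1" 1] by (simp add: Var_def subst_mon_single)

lemma subst_uminus [simp]: "subst s (- f) = - subst s (f :: ('v, 'a::comm_ring_1) mpoly)"
  using subst_add[of s f "- f"] by (simp add: eq_neg_iff_add_eq_0 add.commute)

lemma subst_diff [simp]: "subst s (f - g) = subst s f - subst s (g :: ('v, 'a::comm_ring_1) mpoly)"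
  using subst_add[of s f "- g"] by simp

lemma subst_power [simp]: "subst s (f ^ k) = subst s f ^ k"
  by (induct k) simp_all

lemma subst_prod: "subst s (\<Prod>i\<in>I. f i) = (\<Prod>i\<in>I. subst s (f i))"
  by (induct I rule: infinite_finite_induct) simp_all

lemma subst_subst: "subst s2 (subst s1 f) = subst (\<lambda>v. subst s2 (s1 v)) f"
  unfolding subst_def[of s1]
  by (simp add: subst_sum subst_prod subst_def[of "\<lambda>v. subst s2 (s1 v)"])

lemma Var_power: "Var v ^ e = Poly_Mapping.single (Poly_Mapping.single v e) 1"
  by (induct e) (simp_all add: Var_def mult_single single_add[symmetric] add.commute)

lemma subst_mon_Var: "subst_mon Var m = Poly_Mapping.single m 1"
proof -
  have "subst_mon Var m = (\<Prod>v\<in>Poly_Mapping.keys m.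
      Poly_Mapping.single (Poly_Mapping.single v (Poly_Mapping.lookup m v)) 1)"
    by (simp add: subst_mon_def Var_power)
  also have "\<dots> = Poly_Mapping.single (\<Sum>v\<in>Poly_Mapping.keys m. Poly_Mapping.single v (Poly_Mapping.lookup m v)) 1"
    by (induct rule: finite_induct[OF finite_keys]) (simp_all add: mult_single)
  finally show ?thesis
    by (simp flip: poly_mapping_eq_sum_single)
qed

lemma Cst_mult_single: "Cst c * Poly_Mapping.single m 1 = Poly_Mapping.single m c"
  by (simp add: Cst_def mult_single)

lemma subst_Var_id [simp]: "subst Var p = p"
  unfolding subst_def subst_mon_def[symmetric]
  by (simp add: subst_mon_Var Cst_mult_single flip: poly_mapping_eq_sum_single)

section \<open>Weighted homogeneity\<close>

lemma wdeg_superset: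
  assumes "finite A" "Poly_Mapping.keys m \<subseteq> A"
  shows "wdeg w m = (\<Sum>v\<in>A. w v * Poly_Mapping.lookup m v)"
  unfolding wdeg_def
  by (rule sum.mono_neutral_left) (use assms in \<open>auto simp: in_keys_iff\<close>)

lemma wdeg_add: "wdeg w (m1 + m2) = wdeg w m1 + wdeg w m2"
proof -
  let ?A = "Poly_Mapping.keys m1 \<union> Poly_Mapping.keys m2"
  have "wdeg w (m1 + m2) = (\<Sum>v\<in>?A. w v * Poly_Mapping.lookup (m1 + m2) v)"
    by (rule wdeg_superset) (auto simp: keys_add)
  also have "\<dots> = (\<Sum>v\<in>?A. w v * Poly_Mapping.lookup m1 v) + (\<Sum>v\<in>?A. w v * Poly_Mapping.lookup m2 v)"
    by (simp add: lookup_add sum.distrib algebra_simps)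
  also have "\<dots> = wdeg w m1 + wdeg w m2"
    by (simp add: wdeg_superset[of ?A m1 w] wdeg_superset[of ?A m2 w])
  finally show ?thesis .
qed

lemma homogeneous_0 [simp]: "homogeneous w d 0"
  by (simp add: homogeneous_def)

lemma homogeneous_add:
  "homogeneous w d p \<Longrightarrow> homogeneous w d q \<Longrightarrow> homogeneous w d (p + q)"
  using keys_add[of p q] unfolding homogeneous_def by auto

lemma homogeneous_uminus:
  "homogeneous w d p \<Longrightarrow> homogeneous w d (- (p :: ('v, 'a::ab_group_add) mpoly))"
  unfolding homogeneous_def by (simp add: in_keys_iff)

lemma homogeneous_diff:
  "homogeneous w d p \<Longrightarrow> homogeneous w d q \<Longrightarrow> homogeneous w d (p - (q :: ('v, 'a::ab_group_add) mpoly))"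
  using homogeneous_add[of w d p "- q"] homogeneous_uminus[of w d q] by simp

lemma homogeneous_mult:
  assumes "homogeneous w d1 p" "homogeneous w d2 q" "d = d1 + d2"
  shows "homogeneous w d (p * (q :: ('v, 'a::comm_semiring_1) mpoly))"
  unfolding homogeneous_def
proof
  fix m assume "m \<in> Poly_Mapping.keys (p * q)"
  then obtain a b where "m = a + b" "a \<in> Poly_Mapping.keys p" "b \<in> Poly_Mapping.keys q"
    using keys_mult[of p q] by blast
  then show "wdeg w m = d" using assms by (simp add: wdeg_add homogeneous_def)
qed

lemma homogeneous_single: "homogeneous w (wdeg w m) (Poly_Mapping.single m c)"
  unfolding homogeneous_def by simp

lemma homogeneous_Cst [simp]: "homogeneous w 0 (Cst c)"
  using homogeneous_single[of w 0 c] by (simp add: Cst_def wdeg_def)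

lemma homogeneous_1 [simp]: "homogeneous w 0 (1 :: ('v, 'a::comm_semiring_1) mpoly)"
  using homogeneous_Cst[of w 1] by simp

lemma homogeneous_numeral [simp]: "homogeneous w 0 (numeral k :: ('v, 'a::comm_semiring_1) mpoly)"
  using homogeneous_Cst[of w "numeral k"] by simp

lemma homogeneous_Var: "homogeneous w (w v) (Var v)"
  using homogeneous_single[of w "Poly_Mapping.single v 1" 1] by (simp add: Var_def wdeg_def)

lemma homogeneous_power:
  "homogeneous w d p \<Longrightarrow> homogeneous w (k * d) (p ^ k :: ('v, 'a::comm_semiring_1) mpoly)"
  by (induct k) (auto intro: homogeneous_mult)

lemma homogeneous_sum:
  "(\<And>i. i \<in> I \<Longrightarrow> homogeneous w d (f i)) \<Longrightarrow> homogeneous w d (\<Sum>i\<in>I. f i)"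
  by (induct I rule: infinite_finite_induct) (simp_all add: homogeneous_add)

lemma homogeneous_prod:
  "(\<And>i. i \<in> I \<Longrightarrow> homogeneous w (e i) (f i))
   \<Longrightarrow> homogeneous w (\<Sum>i\<in>I. e i) (\<Prod>i\<in>I. (f i :: ('v, 'a::comm_semiring_1) mpoly))"
  by (induct I rule: infinite_finite_induct) (auto intro: homogeneous_mult)

lemma homogeneous_subst:
  assumes "\<And>v. homogeneous w' (w v) (s v)" "homogeneous w d f"
  shows "homogeneous w' d (subst s f)"
  unfolding subst_def
proof (rule homogeneous_sum)
  fix m assume m: "m \<in> Poly_Mapping.keys f"
  have "homogeneous w' (\<Sum>v\<in>Poly_Mapping.keys m. Poly_Mapping.lookup m v * w v)
          (\<Prod>v\<in>Poly_Mapping.keys m. s v ^ Poly_Mapping.lookup m v)"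
    by (intro homogeneous_prod homogeneous_power assms(1))
  moreover have "(\<Sum>v\<in>Poly_Mapping.keys m. Poly_Mapping.lookup m v * w v) = d"
    using assms(2) m unfolding homogeneous_def wdeg_def by (simp add: mult.commute)
  ultimately show "homogeneous w' d (Cst (Poly_Mapping.lookup f m)
      * (\<Prod>v\<in>Poly_Mapping.keys m. s v ^ Poly_Mapping.lookup m v))"
    by (intro homogeneous_mult[OF homogeneous_Cst]) simp_all
qed

lemma homogeneous_eq_sum_single:
  assumes "homogeneous w d p" "finite M" "\<And>m. wdeg w m = d \<Longrightarrow> m \<in> M"
  shows "p = (\<Sum>m\<in>M. Poly_Mapping.single m (Poly_Mapping.lookup p m))"
proof (rule poly_mapping_eqI)
  fix m
  have "Poly_Mapping.lookup p m = 0" if "m \<notin> M"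
    using assms that unfolding homogeneous_def by (metis in_keys_iff)
  then show "Poly_Mapping.lookup p m
      = Poly_Mapping.lookup (\<Sum>m\<in>M. Poly_Mapping.single m (Poly_Mapping.lookup p m)) m"
    using \<open>finite M\<close> by (auto simp: lookup_sum lookup_single when_def sum.delta)
qed

definition homogeneous_part :: "('v \<Rightarrow> nat) \<Rightarrow> nat \<Rightarrow> ('v, 'a::zero) mpoly \<Rightarrow> ('v, 'a) mpoly" where
  "homogeneous_part w d p = Poly_Mapping.mapp (\<lambda>m c. if wdeg w m = d then c else 0) p"

lemma lookup_homogeneous_part:
  "Poly_Mapping.lookup (homogeneous_part w d p) m = (if wdeg w m = d then Poly_Mapping.lookup p m else 0)"
  by (auto simp: homogeneous_part_def lookup_mapp when_def in_keys_iff)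

lemma homogeneous_part_0 [simp]: "homogeneous_part w d 0 = 0"
  by (rule poly_mapping_eqI) (simp add: lookup_homogeneous_part)

lemma homogeneous_part_add:
  "homogeneous_part w d (p + q) = homogeneous_part w d p + homogeneous_part w d q"
  by (rule poly_mapping_eqI) (simp add: lookup_homogeneous_part lookup_add)

lemma homogeneous_part_sum:
  "homogeneous_part w d (\<Sum>i\<in>I. f i) = (\<Sum>i\<in>I. homogeneous_part w d (f i))"
  by (induct I rule: infinite_finite_induct) (simp_all add: homogeneous_part_add)

lemma homogeneous_part_homogeneous:
  "homogeneous w e p \<Longrightarrow> homogeneous_part w d p = (if e = d then p else 0)"
  by (rule poly_mapping_eqI) (auto simp: lookup_homogeneous_part homogeneous_def in_keys_iff)

lemma homogeneous_homogeneous_part: "homogeneous w d (homogeneous_part w d p)"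
  by (auto simp: homogeneous_def in_keys_iff lookup_homogeneous_part split: if_splits)

lemma homogeneous_part_mult:
  fixes g h :: "('v, 'a::comm_semiring_1) mpoly"
  assumes g: "homogeneous w e g"
  obtains h' where "homogeneous w (d - e) h'" and "homogeneous_part w d (g * h) = g * h'"
proof -
  let ?t = "\<lambda>m. Poly_Mapping.single m (Poly_Mapping.lookup h m)"
  define h' where "h' = (if e \<le> d then homogeneous_part w (d - e) h else 0)"
  have gh: "g * h = (\<Sum>m\<in>Poly_Mapping.keys h. g * ?t m)"
    by (subst poly_mapping_eq_sum_single[of h]) (simp add: sum_distrib_left)
  have "homogeneous_part w d (g * ?t m)
      = g * (if e \<le> d then homogeneous_part w (d - e) (?t m) else 0)" for m
  proof -
    have "homogeneous w (e + wdeg w m) (g * ?t m)"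
      by (rule homogeneous_mult[OF g homogeneous_single]) simp
    then show ?thesis
      using homogeneous_part_homogeneous[OF homogeneous_single[of w m "Poly_Mapping.lookup h m"], of "d - e"]
      by (auto simp: homogeneous_part_homogeneous)
  qed
  then have "homogeneous_part w d (g * h) = g * h'"
    unfolding h'_def gh homogeneous_part_sum
    by (subst (3) poly_mapping_eq_sum_single[of h]) (simp add: homogeneous_part_sum sum_distrib_left)
  moreover have "homogeneous w (d - e) h'"
    by (simp add: h'_def homogeneous_homogeneous_part)
  ultimately show ?thesis using that by blast
qed

section \<open>Eliminating a variable\<close>

lemma subst_mon_Var_upd_0:
  "subst_mon (Var(v := 0)) m
     = (if Poly_Mapping.lookup m v = 0 then Poly_Mapping.single m 1 else (0 :: ('v, 'a::comm_semiring_1) mpoly))"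
proof (cases "Poly_Mapping.lookup m v = 0")
  case True
  then have "subst_mon (Var(v := 0)) m = subst_mon Var m"
    unfolding subst_mon_def by (intro prod.cong) (auto simp: in_keys_iff)
  with True show ?thesis by (simp add: subst_mon_Var)
next
  case False
  then have "v \<in> Poly_Mapping.keys m" and "(Var(v := 0)) v ^ Poly_Mapping.lookup m v = 0"
    by (simp_all add: in_keys_iff power_0_left)
  then have "subst_mon (Var(v := 0)) m = 0"
    unfolding subst_mon_def by (metis finite_keys prod_zero)
  with False show ?thesis by simp
qed

lemma lookup_subst_Var_upd_0:
  "Poly_Mapping.lookup (subst (Var(v := 0)) g) m
     = (if Poly_Mapping.lookup m v = 0 then Poly_Mapping.lookup g m else (0 :: 'a::comm_semiring_1))"
proof -
  let ?t = "\<lambda>x. if Poly_Mapping.lookup x v = 0 then Poly_Mapping.single x (Poly_Mapping.lookup g x) else 0"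
  have "subst (Var(v := 0)) g
      = (\<Sum>x\<in>Poly_Mapping.keys g. Cst (Poly_Mapping.lookup g x) * subst_mon (Var(v := 0)) x)"
    by (simp add: subst_def subst_mon_def)
  also have "\<dots> = (\<Sum>x\<in>Poly_Mapping.keys g. ?t x)"
    unfolding subst_mon_Var_upd_0 by (intro sum.cong refl) (simp add: Cst_mult_single)
  finally have "Poly_Mapping.lookup (subst (Var(v := 0)) g) m
      = (\<Sum>x\<in>Poly_Mapping.keys g. Poly_Mapping.lookup (?t x) m)"
    by (simp only: lookup_sum)
  also have "\<dots> = (\<Sum>x\<in>Poly_Mapping.keys g.
      if x = m then (if Poly_Mapping.lookup m v = 0 then Poly_Mapping.lookup g m else 0) else 0)"
    by (rule sum.cong[OF refl]) (auto simp: lookup_single when_def)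
  finally show ?thesis
    by (auto simp: in_keys_iff)
qed

lemma Var_mult_factor_if_subst_Var_upd_0:
  fixes g :: "('v, 'a::comm_semiring_1) mpoly"
  assumes "subst (Var(v := 0)) g = 0"
  obtains g' where "g = Var v * g'"
    and "\<And>m. m \<in> Poly_Mapping.keys g' \<Longrightarrow> m + Poly_Mapping.single v 1 \<in> Poly_Mapping.keys g"
proof -
  let ?e = "Poly_Mapping.single v (1::nat)"
  have split: "?e + (m - ?e) = m" if "m \<in> Poly_Mapping.keys g" for m
  proof -
    have "Poly_Mapping.lookup m v \<noteq> 0"
      using that assms lookup_subst_Var_upd_0[of v g m] by (auto simp: in_keys_iff split: if_splits)
    then show ?thesis
      by (intro poly_mapping_eqI, rename_tac u, case_tac "u = v")
        (simp_all add: lookup_add lookup_minus lookup_single)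
  qed
  define g' where "g' = (\<Sum>m\<in>Poly_Mapping.keys g. Poly_Mapping.single (m - ?e) (Poly_Mapping.lookup g m))"
  have "Var v * g' = (\<Sum>m\<in>Poly_Mapping.keys g. Poly_Mapping.single m (Poly_Mapping.lookup g m))"
    unfolding g'_def sum_distrib_left
    by (intro sum.cong refl) (simp only: Var_def mult_single split mult_1)
  then have "g = Var v * g'"
    by (simp flip: poly_mapping_eq_sum_single)
  moreover have "m + ?e \<in> Poly_Mapping.keys g" if "m \<in> Poly_Mapping.keys g'" for m
  proof -
    have "m \<in> (\<Union>m0\<in>Poly_Mapping.keys g.
        Poly_Mapping.keys (Poly_Mapping.single (m0 - ?e) (Poly_Mapping.lookup g m0)))"
      using that unfolding g'_def by (rule subsetD[OF keys_sum])
    then obtain m0 where "m0 \<in> Poly_Mapping.keys g" "m = m0 - ?e"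
      by (auto split: if_splits)
    then show ?thesis
      using split[of m0] by (simp add: add.commute)
  qed
  ultimately show ?thesis using that by blast
qed

text \<open>If \<open>subst s g = 0\<close> then also \<open>subst (Var(v := 0)) g = 0\<close>, so \<open>Var v\<close> divides \<open>g\<close>; since
  \<open>s v\<close> is not a zero divisor the cofactor is killed by \<open>s\<close> as well, and we induct on the
  degree in \<open>v\<close>.\<close>

lemma subst_eq_0_imp_eq_0:
  fixes s :: "'v \<Rightarrow> ('w::linorder, 'a::idom) mpoly" and \<sigma> :: "'w \<Rightarrow> ('v, 'a) mpoly"
  assumes retraction: "\<And>u. subst \<sigma> (s u) = (Var(v := 0)) u"
    and "s v \<noteq> 0" and "subst s g = 0"
  shows "g = 0"
proof -
  have "\<forall>g. (\<forall>m\<in>Poly_Mapping.keys g. Poly_Mapping.lookup m v < N) \<longrightarrow> subst s g = 0 \<longrightarrow> g = 0" for N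
  proof (induction N)
    case 0
    then show ?case by auto
  next
    case (Suc N)
    show ?case
    proof (intro allI impI)
      fix g :: "('v, 'a) mpoly"
      assume bound: "\<forall>m\<in>Poly_Mapping.keys g. Poly_Mapping.lookup m v < Suc N" and g: "subst s g = 0"
      have "subst (Var(v := 0)) g = subst \<sigma> (subst s g)"
        by (simp only: subst_subst retraction)
      with g obtain g' where g': "g = Var v * g'"
        and keys: "\<And>m. m \<in> Poly_Mapping.keys g' \<Longrightarrow> m + Poly_Mapping.single v 1 \<in> Poly_Mapping.keys g"
        using Var_mult_factor_if_subst_Var_upd_0 by (metis subst_0)
      have "s v * subst s g' = 0"
        using g by (simp add: g')
      with \<open>s v \<noteq> 0\<close> have "subst s g' = 0" by simp
      moreover have "\<forall>m\<in>Poly_Mapping.keys g'. Poly_Mapping.lookup m v < N"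
        using keys bound by (fastforce simp: lookup_add)
      ultimately show "g = 0"
        using Suc.IH g' by auto
    qed
  qed
  moreover have "\<forall>m\<in>Poly_Mapping.keys g. Poly_Mapping.lookup m v
      < Suc (\<Sum>m\<in>Poly_Mapping.keys g. Poly_Mapping.lookup m v)"
    by (intro ballI le_imp_less_Suc member_le_sum) simp_all
  ultimately show ?thesis
    using \<open>subst s g = 0\<close> by blast
qed

lemma ideal_gen_Nil [simp]: "ideal_gen [] = {0}"
  by (simp add: ideal_gen_def)

lemma mem_ideal_gen_Cons:
  "p \<in> ideal_gen (x # xs) \<longleftrightarrow> (\<exists>a r. p = a * x + r \<and> r \<in> ideal_gen xs)"
proof -
  have split: "(\<Sum>i<length (x # xs). c i * (x # xs) ! i) = c 0 * x + (\<Sum>i<length xs. c (Suc i) * xs ! i)"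
    for c
    by (simp only: length_Cons sum.lessThan_Suc_shift nth_Cons_0 nth_Cons_Suc)
  show ?thesis
  proof
    assume "p \<in> ideal_gen (x # xs)"
    then obtain c where "p = (\<Sum>i<length (x # xs). c i * (x # xs) ! i)"
      by (auto simp: ideal_gen_def)
    moreover have "(\<Sum>i<length xs. c (Suc i) * xs ! i) \<in> ideal_gen xs"
      unfolding ideal_gen_def by (intro CollectI exI[of _ "\<lambda>i. c (Suc i)"]) simp
    ultimately show "\<exists>a r. p = a * x + r \<and> r \<in> ideal_gen xs"
      unfolding split by blast
  next
    assume "\<exists>a r. p = a * x + r \<and> r \<in> ideal_gen xs"
    then obtain a c where "p = a * x + (\<Sum>i<length xs. c i * xs ! i)"
      by (auto simp: ideal_gen_def)
    then have "p = (\<Sum>i<length (x # xs). case_nat a c i * (x # xs) ! i)"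
      unfolding split by simp
    then show "p \<in> ideal_gen (x # xs)"
      unfolding ideal_gen_def by blast
  qed
qed

lemma ideal_gen_0: "0 \<in> ideal_gen xs"
  unfolding ideal_gen_def by (intro CollectI exI[of _ "\<lambda>_. 0"]) simp

lemma ideal_gen_add: "p \<in> ideal_gen xs \<Longrightarrow> q \<in> ideal_gen xs \<Longrightarrow> p + q \<in> ideal_gen xs"
proof (induction xs arbitrary: p q)
  case (Cons x xs)
  then obtain a r b r' where "p = a * x + r" "q = b * x + r'" "r \<in> ideal_gen xs" "r' \<in> ideal_gen xs"
    by (auto simp: mem_ideal_gen_Cons)
  moreover from this have "p + q = (a + b) * x + (r + r')"
    by (simp add: algebra_simps)
  ultimately show ?case
    using Cons.IH unfolding mem_ideal_gen_Cons by blast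
qed simp

lemma ideal_gen_mult: "p \<in> ideal_gen xs \<Longrightarrow> a * p \<in> ideal_gen xs"
proof (induction xs arbitrary: p)
  case (Cons x xs)
  then obtain b r where "p = b * x + r" "r \<in> ideal_gen xs"
    by (auto simp: mem_ideal_gen_Cons)
  moreover from this have "a * p = (a * b) * x + a * r"
    by (simp add: algebra_simps)
  ultimately show ?case
    using Cons.IH unfolding mem_ideal_gen_Cons by blast
qed simp

lemma ideal_gen_cancel_Cst:
  assumes "Cst c * p \<in> ideal_gen xs" "c \<noteq> 0"
  shows "(p :: ('v, 'a::field) mpoly) \<in> ideal_gen xs"
proof -
  have "Cst (1 / c) * (Cst c * p) = p"
    using \<open>c \<noteq> 0\<close> by (simp add: mult.assoc[symmetric] Cst_mult[symmetric])
  then show ?thesis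
    using ideal_gen_mult[OF assms(1), of "Cst (1 / c)"] by simp
qed

text \<open>Poly_Mapping makes a polynomial ring an integral domain only when its variables are
  linearly ordered.\<close>

instantiation V2 :: linorder
begin

fun V2_index :: "V2 \<Rightarrow> nat" where
  "V2_index ub = 0" | "V2_index uq = 1" | "V2_index ur1 = 2" | "V2_index ur2 = 3"

definition less_eq_V2 :: "V2 \<Rightarrow> V2 \<Rightarrow> bool" where
  "less_eq_V2 u v \<longleftrightarrow> V2_index u \<le> V2_index v"

definition less_V2 :: "V2 \<Rightarrow> V2 \<Rightarrow> bool" where
  "less_V2 u v \<longleftrightarrow> V2_index u < V2_index v"

instance
proof
  have inj: "V2_index u = V2_index v \<Longrightarrow> u = v" for u v
    by (cases u; cases v) simp_all
  fix u v w :: V2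
  show "u < v \<longleftrightarrow> u \<le> v \<and> \<not> v \<le> u" "u \<le> u" "u \<le> v \<or> v \<le> u"
    by (auto simp: less_eq_V2_def less_V2_def)
  show "u \<le> v \<Longrightarrow> v \<le> w \<Longrightarrow> u \<le> w" "u \<le> v \<Longrightarrow> v \<le> u \<Longrightarrow> u = v"
    using inj by (auto simp: less_eq_V2_def)
qed

end

abbreviation Vb :: P1 where "Vb \<equiv> Var vb"
abbreviation Vt :: P1 where "Vt \<equiv> Var vt"
abbreviation Vk :: P1 where "Vk \<equiv> Var vk"

abbreviation Ub :: P2 where "Ub \<equiv> Var ub"
abbreviation Uq :: P2 where "Uq \<equiv> Var uq"
abbreviation Ur1 :: P2 where "Ur1 \<equiv> Var ur1"
abbreviation Ur2 :: P2 where "Ur2 \<equiv> Var ur2"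
abbreviation Us :: P2 where "Us \<equiv> Ur1 + Ur2 - 4 * Ub"

abbreviation swap_r :: "P2 \<Rightarrow> P2" where
  "swap_r \<equiv> subst (\<lambda>v. case v of ur1 \<Rightarrow> Ur2 | ur2 \<Rightarrow> Ur1 | _ \<Rightarrow> Var v)"

abbreviation kill_q :: "P2 \<Rightarrow> P2" where
  "kill_q \<equiv> subst (\<lambda>v. case v of uq \<Rightarrow> 0 | _ \<Rightarrow> Var v)"

abbreviation eval_q0 :: "P2 \<Rightarrow> P2 \<Rightarrow> P2 \<Rightarrow> P2" where
  "eval_q0 a c \<equiv> subst (\<lambda>v. case v of ub \<Rightarrow> 1 | uq \<Rightarrow> 0 | ur1 \<Rightarrow> a | ur2 \<Rightarrow> c)"

lemma phi_simps [simp]: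
  "phi (f + g) = phi f + phi g" "phi (f - g) = phi f - phi g" "phi (f * g) = phi f * phi g"
  "phi (f ^ k) = phi f ^ k" "phi 0 = 0" "phi 1 = 1" "phi (numeral m) = numeral m"
  "phi (Cst c) = Cst c" "phi (Var v) = phi_img v"
  by (simp_all add: phi_def)

lemma Emul_apply [simp]:
  "Emul (x, y, z) = (Ub * x + 2 * Uq * y + 2 * Uq * z, x + (Ur1 - Ub) * y, x + (Ur2 - Ub) * z)"
  by (simp add: Emul_def)

lemma Amul_apply [simp]: "Amul (x, y, z) = (Vb * x, x + Vk * z, y + Vt * z)"
  by (simp add: Amul_def)

lemma R_Suc_0: "R (Suc 0) = (Ub, 1, 1)"
  by (simp add: R_def R1_def)

lemma R_Suc_Suc: "R (Suc (Suc k)) = Emul (R (Suc k))"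
  by (simp add: R_def)

lemma G_Suc_0: "G (Suc 0) = (Vb * (2 * Vb - Vt), 2 * Vb - Vt, 2)"
  by (simp add: G_def G1_def)

lemma G_Suc_Suc: "G (Suc (Suc k)) = Amul (G (Suc k))"
  by (simp add: G_def)

lemma R_induct [consumes 1, case_names base step]:
  assumes "R (Suc k) = (x, y, z)"
    and "P 0 Ub 1 1"
    and "\<And>k x y z. R (Suc k) = (x, y, z) \<Longrightarrow> P k x y z
      \<Longrightarrow> P (Suc k) (Ub * x + 2 * Uq * y + 2 * Uq * z) (x + (Ur1 - Ub) * y) (x + (Ur2 - Ub) * z)"
  shows "P k x y z"
  using assms(1)
proof (induction k arbitrary: x y z)
  case 0
  with assms(2) show ?case by (simp add: R_Suc_0)
next
  case (Suc k)
  obtain x' y' z' where R': "R (Suc k) = (x', y', z')"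
    by (cases "R (Suc k)")
  with Suc.prems have "(x, y, z) = Emul (x', y', z')"
    by (simp add: R_Suc_Suc)
  with assms(3)[OF R' Suc.IH[OF R']] show ?case
    by simp
qed

lemma homogeneous_Ub: "homogeneous w2 1 Ub"
  and homogeneous_Uq: "homogeneous w2 2 Uq"
  and homogeneous_Ur1: "homogeneous w2 1 Ur1"
  and homogeneous_Ur2: "homogeneous w2 1 Ur2"
  using homogeneous_Var[of w2] by (metis w2.simps)+

lemma homogeneous_Us: "homogeneous w2 1 Us"
  by (intro homogeneous_diff homogeneous_add homogeneous_Ur1 homogeneous_Ur2
      homogeneous_mult[OF homogeneous_numeral homogeneous_Ub]) simp

lemma homogeneous_R:
  assumes "R (Suc k) = (x, y, z)"
  shows "homogeneous w2 (Suc k) x \<and> homogeneous w2 k y \<and> homogeneous w2 k z"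
  using assms
proof (induction k x y z rule: R_induct)
  case base
  then show ?case using homogeneous_Var[of w2 ub] by simp
next
  case (step k x y z)
  then have x: "homogeneous w2 (Suc k) x" and y: "homogeneous w2 k y" and z: "homogeneous w2 k z"
    by simp_all
  have "homogeneous w2 (Suc (Suc k)) (Ub * x + 2 * Uq * y + 2 * Uq * z)"
    by (intro homogeneous_add homogeneous_mult[OF homogeneous_Ub x]
        homogeneous_mult[OF homogeneous_mult[OF homogeneous_numeral homogeneous_Uq] y]
        homogeneous_mult[OF homogeneous_mult[OF homogeneous_numeral homogeneous_Uq] z]) simp_all
  moreover have "homogeneous w2 (Suc k) (x + (Ur1 - Ub) * y)" "homogeneous w2 (Suc k) (x + (Ur2 - Ub) * z)"
    by (intro homogeneous_add x homogeneous_mult[OF homogeneous_diff[OF homogeneous_Ur1 homogeneous_Ub] y]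
        homogeneous_mult[OF homogeneous_diff[OF homogeneous_Ur2 homogeneous_Ub] z], simp)+
  ultimately show ?case by simp
qed

lemma swap_r_R:
  assumes "R (Suc k) = (x, y, z)"
  shows "swap_r x = x \<and> swap_r y = z \<and> swap_r z = y"
  using assms by (induction k x y z rule: R_induct) (simp_all add: algebra_simps)

lemma R_eval_q0:
  assumes "R (Suc k) = (x, y, z)"
  obtains h where "x = Ub ^ Suc k + Uq * h"
    and "eval_q0 2 2 h = of_nat (2 * k * (k + 1))" "eval_q0 3 1 h = 2 ^ (k + 2) - 4"
    and "eval_q0 2 2 y = of_nat (Suc k)" "eval_q0 2 2 z = of_nat (Suc k)"
    and "eval_q0 3 1 y = 2 ^ Suc k - 1" "eval_q0 3 1 z = 1"
proof -
  have "\<exists>h. x = Ub ^ Suc k + Uq * h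
      \<and> eval_q0 2 2 h = of_nat (2 * k * (k + 1)) \<and> eval_q0 3 1 h = 2 ^ (k + 2) - 4
      \<and> eval_q0 2 2 y = of_nat (Suc k) \<and> eval_q0 2 2 z = of_nat (Suc k)
      \<and> eval_q0 3 1 y = 2 ^ Suc k - 1 \<and> eval_q0 3 1 z = 1"
    using assms
  proof (induction k x y z rule: R_induct)
    case base
    show ?case by (intro exI[of _ 0]) simp
  next
    case (step k x y z)
    then obtain h where x: "x = Ub ^ Suc k + Uq * h"
      and h: "eval_q0 2 2 h = of_nat (2 * k * (k + 1))" "eval_q0 3 1 h = 2 ^ (k + 2) - 4"
      and yz: "eval_q0 2 2 y = of_nat (Suc k)" "eval_q0 2 2 z = of_nat (Suc k)"
        "eval_q0 3 1 y = 2 ^ Suc k - 1" "eval_q0 3 1 z = 1"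
      by blast
    show ?case
    proof (intro exI conjI)
      show "Ub * x + 2 * Uq * y + 2 * Uq * z = Ub ^ Suc (Suc k) + Uq * (Ub * h + 2 * (y + z))"
        by (simp add: x algebra_simps)
    qed (simp_all add: x h yz algebra_simps)
  qed
  with that show ?thesis by blast
qed

lemma homogeneous_phi_img: "homogeneous w2 (w1 v) (phi_img v)"
proof (cases v)
  case vb
  then show ?thesis using homogeneous_Var[of w2 ub] by simp
next
  case vt
  have "homogeneous w2 1 (Ur1 + Ur2 - Cst 2 * Ub)"
    by (intro homogeneous_diff homogeneous_add homogeneous_Ur1 homogeneous_Ur2
        homogeneous_mult[OF homogeneous_Cst homogeneous_Ub]) simp
  with vt show ?thesis by simp
next
  case vk
  have "homogeneous w2 2 (Cst 4 * Uq - (Ub - Ur1) * (Ub - Ur2))"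
    by (intro homogeneous_diff homogeneous_mult[OF homogeneous_Cst homogeneous_Uq]
        homogeneous_mult[OF homogeneous_diff[OF homogeneous_Ub homogeneous_Ur1]
          homogeneous_diff[OF homogeneous_Ub homogeneous_Ur2]]) simp_all
  with vk show ?thesis by simp
qed

lemma homogeneous_phi: "homogeneous w1 d f \<Longrightarrow> homogeneous w2 d (phi f)"
  unfolding phi_def by (rule homogeneous_subst[OF homogeneous_phi_img])

lemma homogeneous_swap_r: "homogeneous w2 d p \<Longrightarrow> homogeneous w2 d (swap_r p)"
proof (rule homogeneous_subst)
  fix v
  show "homogeneous w2 (w2 v) (case v of ur1 \<Rightarrow> Ur2 | ur2 \<Rightarrow> Ur1 | _ \<Rightarrow> Var v)"
    using homogeneous_Var[of w2 ur1] homogeneous_Var[of w2 ur2] homogeneous_Var[of w2 v]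
    by (cases v) simp_all
qed

lemma swap_r_swap_r [simp]: "swap_r (swap_r p) = p"
proof -
  have "(\<lambda>v. swap_r (case v of ur1 \<Rightarrow> Ur2 | ur2 \<Rightarrow> Ur1 | _ \<Rightarrow> Var v)) = Var"
    by (rule ext, rename_tac v, case_tac v) simp_all
  then show ?thesis
    by (simp add: subst_subst)
qed

lemma swap_r_phi: "swap_r (phi f) = phi f"
proof -
  have "(\<lambda>v. swap_r (phi_img v)) = phi_img"
    by (rule ext, rename_tac v, case_tac v) (simp_all add: algebra_simps)
  then show ?thesis
    by (simp add: phi_def subst_subst)
qed

section \<open>The morphism\<close>

lemma phi_G_congruent_R:
  assumes "G (Suc k) = (X, Y, Z)" and "R (Suc k) = (x, y, z)"
  shows "Uq * Us dvd phi X + Us * x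
    \<and> Uq * Us dvd phi Y - (2 * x - (Ur2 - Ub) * y - (Ur1 - Ub) * z)
    \<and> Uq * Us dvd phi Z - (y + z)"
  using assms
proof (induction k arbitrary: X Y Z x y z)
  case 0
  then have "(X, Y, Z) = G (Suc 0)" "(x, y, z) = R (Suc 0)"
    by simp_all
  then have "X = Vb * (2 * Vb - Vt)" "Y = 2 * Vb - Vt" "Z = 2" "x = Ub" "y = 1" "z = 1"
    by (simp_all add: G_Suc_0 R_Suc_0)
  then show ?case
    by (simp only:) (simp add: algebra_simps)
next
  case (Suc k)
  obtain X0 Y0 Z0 where G0: "G (Suc k) = (X0, Y0, Z0)"
    by (cases "G (Suc k)")
  obtain x0 y0 z0 where R0: "R (Suc k) = (x0, y0, z0)"
    by (cases "R (Suc k)")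
  have XYZ: "X = Vb * X0" "Y = X0 + Vk * Z0" "Z = Y0 + Vt * Z0"
    using Suc.prems(1) by (simp_all add: G_Suc_Suc G0)
  have xyz: "x = Ub * x0 + 2 * Uq * y0 + 2 * Uq * z0" "y = x0 + (Ur1 - Ub) * y0" "z = x0 + (Ur2 - Ub) * z0"
    using Suc.prems(2) by (simp_all add: R_Suc_Suc R0)
  have "phi X + Us * x = Ub * (phi X0 + Us * x0) + Uq * Us * (2 * (y0 + z0))"
    by (simp add: XYZ xyz algebra_simps)
  moreover have "phi Y - (2 * x - (Ur2 - Ub) * y - (Ur1 - Ub) * z)
      = (phi X0 + Us * x0) + phi Vk * (phi Z0 - (y0 + z0))"
    by (simp add: XYZ xyz algebra_simps)
  moreover have "phi Z - (y + z)
      = (phi Y0 - (2 * x0 - (Ur2 - Ub) * y0 - (Ur1 - Ub) * z0)) + phi Vt * (phi Z0 - (y0 + z0))"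
    by (simp add: XYZ xyz algebra_simps)
  ultimately show ?case
    using Suc.IH[OF G0 R0] by (simp add: dvd_add)
qed

lemma mem_JG_iff:
  "G (Suc n) = (X, Y, Z) \<Longrightarrow> f \<in> JG n \<longleftrightarrow> (\<exists>a b c. f = a * X + b * Y + c * Z)"
  unfolding JG_def entries_def by (simp add: mem_ideal_gen_Cons add.assoc) blast

lemma mem_IR_iff:
  "R (Suc n) = (x, y, z)
   \<Longrightarrow> p \<in> IR n \<longleftrightarrow> (\<exists>c0 c1 c2 c3. p = Uq * Us * c0 + x * c1 + y * c2 + z * c3)"
  unfolding IR_def entries_def by (simp add: mem_ideal_gen_Cons add.assoc mult.commute) blast

lemma phi_JG_subset_IR: "phi ` JG n \<subseteq> IR n"
proof
  obtain X Y Z where G: "G (Suc n) = (X, Y, Z)"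
    by (cases "G (Suc n)")
  obtain x y z where R: "R (Suc n) = (x, y, z)"
    by (cases "R (Suc n)")
  obtain m1 m2 m3 where
    X: "phi X = Uq * Us * m1 - Us * x" and
    Y: "phi Y = Uq * Us * m2 + (2 * x - (Ur2 - Ub) * y - (Ur1 - Ub) * z)" and
    Z: "phi Z = Uq * Us * m3 + (y + z)"
    using phi_G_congruent_R[OF G R] by (auto simp: dvd_def eq_diff_eq diff_eq_eq)
  fix p
  assume "p \<in> phi ` JG n"
  then obtain f where "f \<in> JG n" "p = phi f"
    by blast
  then obtain a b c where "p = phi (a * X + b * Y + c * Z)"
    unfolding mem_JG_iff[OF G] by blast
  then have "p = Uq * Us * (phi a * m1 + phi b * m2 + phi c * m3) + x * (2 * phi b - Us * phi a)
      + y * (phi c - (Ur2 - Ub) * phi b) + z * (phi c - (Ur1 - Ub) * phi b)"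
    by (simp add: X Y Z algebra_simps)
  then show "p \<in> IR n"
    unfolding mem_IR_iff[OF R] by blast
qed

section \<open>Injectivity in degrees at most n + 2\<close>

text \<open>For \<open>q = 0\<close> the map \<open>phi\<close> sends \<open>b, t, k\<close> to \<open>b, r1 + r2 - 2 b, -(b - r1)(b - r2)\<close>;
  substituting \<open>r1 = t + b\<close> and \<open>r2 = b\<close> undoes this except that \<open>k\<close> goes to 0.\<close>

lemma inj_kill_q_phi: "inj (\<lambda>f. kill_q (phi f))"
proof (rule injI)
  let ?s = "\<lambda>v. kill_q (phi_img v)"
  let ?\<sigma> = "\<lambda>u. case u of ub \<Rightarrow> Vb | uq \<Rightarrow> 0 | ur1 \<Rightarrow> Vt + Vb | ur2 \<Rightarrow> Vb"
  fix f g
  assume "kill_q (phi f) = kill_q (phi g)"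
  then have "subst ?s (f - g) = 0"
    by (simp add: phi_def subst_subst)
  moreover have "subst ?\<sigma> (?s v) = (Var(vk := 0)) v" for v
    by (cases v) simp_all
  moreover have "?s vk \<noteq> 0"
    by simp
  ultimately have "f - g = 0"
    by (intro subst_eq_0_imp_eq_0[where s = ?s and \<sigma> = ?\<sigma> and v = vk])
  then show "f = g"
    by simp
qed

lemma residue_vanishes:
  assumes R: "R (Suc n) = (x, y, z)"
    and "Uq * Us dvd phi g - (Cst a * Ub ^ i * x + Cst c * Uq * (y + z))"
  shows "g = Cst a * Vb ^ (i + Suc n)"
    and "a * of_nat n + c = 0"
    and "a * (2 ^ (n + 2) - 4) + c * 2 ^ (n + 1) = 0"
proof -
  obtain K where K: "phi g = Uq * Us * K + (Cst a * Ub ^ i * x + Cst c * Uq * (y + z))"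
    using assms(2) by (auto simp: dvd_def diff_eq_eq)
  obtain h where x: "x = Ub ^ Suc n + Uq * h"
    and h: "eval_q0 2 2 h = of_nat (2 * n * (n + 1))" "eval_q0 3 1 h = 2 ^ (n + 2) - 4"
    and yz: "eval_q0 2 2 y = of_nat (Suc n)" "eval_q0 2 2 z = of_nat (Suc n)"
      "eval_q0 3 1 y = 2 ^ Suc n - 1" "eval_q0 3 1 z = 1"
    using R_eval_q0[OF R] by blast
  have "kill_q (phi g) = kill_q (phi (Cst a * Vb ^ (i + Suc n)))"
    by (simp add: K x power_add mult.assoc)
  then show g: "g = Cst a * Vb ^ (i + Suc n)"
    using inj_kill_q_phi unfolding inj_def by blast
  have "Uq * (Us * K + Cst a * Ub ^ i * h + Cst c * (y + z)) = phi g - Cst a * Ub ^ (i + Suc n)"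
    by (simp add: K x power_add algebra_simps)
  then have E: "Us * K + Cst a * Ub ^ i * h + Cst c * (y + z) = 0"
    by (simp add: g)
  \<comment> \<open>Both evaluation points \<open>(b, q, r1, r2) = (1, 0, 2, 2), (1, 0, 3, 1)\<close> lie on \<open>s = 0\<close>.\<close>
  have "Cst (a * of_nat (2 * n * (n + 1)) + c * (2 * of_nat (Suc n)))
      = eval_q0 2 2 (Us * K + Cst a * Ub ^ i * h + Cst c * (y + z))"
    by (simp add: h yz Cst_add Cst_mult Cst_of_nat)
  then have "a * of_nat (2 * n * (n + 1)) + c * (2 * of_nat (Suc n)) = 0"
    by (simp add: E)
  then have "(2 * of_nat (Suc n)) * (a * of_nat n + c) = 0"
    by (simp add: algebra_simps)
  then show "a * of_nat n + c = 0"
    by (simp del: of_nat_Suc)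
  have "Cst (a * (2 ^ (n + 2) - 4) + c * 2 ^ (n + 1))
      = eval_q0 3 1 (Us * K + Cst a * Ub ^ i * h + Cst c * (y + z))"
    by (simp add: h yz Cst_add Cst_mult Cst_diff Cst_power)
  then show "a * (2 ^ (n + 2) - 4) + c * 2 ^ (n + 1) = 0"
    by (simp add: E)
qed

lemma residue_relations_imp_zero:
  fixes a c :: complex
  assumes "n \<ge> 2" "a * of_nat n + c = 0" "a * (2 ^ (n + 2) - 4) + c * 2 ^ (n + 1) = 0"
  shows "a = 0"
proof -
  have "a * (2 ^ (n + 2) - 4 - of_nat n * 2 ^ (n + 1)) = 0"
    using assms(2,3) by (simp add: algebra_simps eq_neg_iff_add_eq_0[symmetric])
  moreover have "(2 ^ (n + 2) - 4 - of_nat n * 2 ^ (n + 1) :: complex) \<noteq> 0"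
  proof
    assume "(2 ^ (n + 2) - 4 - of_nat n * 2 ^ (n + 1) :: complex) = 0"
    then have "of_nat (2 ^ (n + 2)) = (of_nat (4 + n * 2 ^ (n + 1)) :: complex)"
      by (simp add: algebra_simps)
    then have "2 ^ (n + 2) = 4 + n * (2::nat) ^ (n + 1)"
      using of_nat_eq_iff by blast
    moreover have "2 * 2 ^ (n + 1) \<le> n * (2::nat) ^ (n + 1)"
      using \<open>n \<ge> 2\<close> by simp
    ultimately show False
      by simp
  qed
  ultimately show ?thesis
    by simp
qed

lemma Vb_cube_mem_JG_1: "Vb ^ 3 \<in> JG 1"
proof -
  obtain X Y Z where G: "G (Suc 1) = (X, Y, Z)"
    by (cases "G (Suc 1)")
  then have "X = Vb * (Vb * (2 * Vb - Vt))" "Z = 2 * Vb - Vt + Vt * 2"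
    using G_Suc_Suc[of 0] by (simp_all add: G_Suc_0)
  then have "Cst 4 * Vb ^ 3 = 1 * X + 0 * Y + Vb ^ 2 * Z"
    by (simp add: algebra_simps power3_eq_cube power2_eq_square)
  then have "Cst 4 * Vb ^ 3 \<in> JG 1"
    unfolding mem_JG_iff[OF G] by blast
  then show ?thesis
    unfolding JG_def by (rule ideal_gen_cancel_Cst) simp
qed

text \<open>The identities in \<open>reducible \<alpha> \<beta>\<close> say that, for \<open>f\<close> whose image has the symmetrised
  coefficients \<open>\<alpha>\<close> at \<open>x\<close> and \<open>\<beta>\<close>, \<open>swap_r \<beta>\<close> at \<open>y\<close>, \<open>z\<close>, the element
  \<open>4 f - (A X + B Y + C Z)\<close> is mapped to \<open>a b^i x + c q (y + z)\<close> modulo \<open>q s\<close>.\<close>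

definition reducible :: "P2 \<Rightarrow> P2 \<Rightarrow> bool" where
  "reducible \<alpha> \<beta> \<longleftrightarrow> (\<exists>A B C a c i.
     2 * (\<alpha> + swap_r \<alpha>) + Us * phi A - 2 * phi B = Cst a * Ub ^ i
   \<and> 2 * \<beta> + (Ur2 - Ub) * phi B - phi C = Cst c * Uq
   \<and> 2 * swap_r \<beta> + (Ur1 - Ub) * phi B - phi C = Cst c * Uq
   \<and> (i = 0 \<and> c = 0 \<or> i = 1))"

lemma phi_reduction_congruent:
  assumes G: "G (Suc n) = (X, Y, Z)" and R: "R (Suc n) = (x, y, z)"
    and f: "phi f = Uq * Us * K + x * \<alpha> + y * \<beta>1 + z * \<beta>2"
    and cx: "2 * (\<alpha> + swap_r \<alpha>) + Us * phi A - 2 * phi B = Cst a * Ub ^ i"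
    and cy: "2 * (\<beta>1 + swap_r \<beta>2) + (Ur2 - Ub) * phi B - phi C = Cst c * Uq"
    and cz: "2 * swap_r (\<beta>1 + swap_r \<beta>2) + (Ur1 - Ub) * phi B - phi C = Cst c * Uq"
  shows "Uq * Us dvd phi (4 * f - (A * X + B * Y + C * Z)) - (Cst a * Ub ^ i * x + Cst c * Uq * (y + z))"
proof -
  have "2 * phi f = phi f + swap_r (phi f)"
    by (simp add: swap_r_phi)
  also have "\<dots> = Uq * Us * (K + swap_r K) + x * (\<alpha> + swap_r \<alpha>)
      + y * (\<beta>1 + swap_r \<beta>2) + z * (\<beta>2 + swap_r \<beta>1)"
    using swap_r_R[OF R] by (simp add: f algebra_simps)
  finally have sym: "2 * phi f = \<dots>" .
  obtain m1 m2 m3 where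
    X: "phi X = Uq * Us * m1 - Us * x" and
    Y: "phi Y = Uq * Us * m2 + (2 * x - (Ur2 - Ub) * y - (Ur1 - Ub) * z)" and
    Z: "phi Z = Uq * Us * m3 + (y + z)"
    using phi_G_congruent_R[OF G R] by (auto simp: dvd_def eq_diff_eq diff_eq_eq)
  have "phi (4 * f - (A * X + B * Y + C * Z))
      = 2 * (2 * phi f) - (phi A * phi X + phi B * phi Y + phi C * phi Z)"
    by simp
  also have "\<dots> = Uq * Us * (2 * (K + swap_r K) - phi A * m1 - phi B * m2 - phi C * m3)
      + x * (2 * (\<alpha> + swap_r \<alpha>) + Us * phi A - 2 * phi B)
      + y * (2 * (\<beta>1 + swap_r \<beta>2) + (Ur2 - Ub) * phi B - phi C)
      + z * (2 * swap_r (\<beta>1 + swap_r \<beta>2) + (Ur1 - Ub) * phi B - phi C)"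
    unfolding sym X Y Z by (simp add: algebra_simps)
  also have "\<dots> = Uq * Us * (2 * (K + swap_r K) - phi A * m1 - phi B * m2 - phi C * m3)
      + (Cst a * Ub ^ i * x + Cst c * Uq * (y + z))"
    unfolding cx cy cz by (simp add: algebra_simps)
  finally show ?thesis
    by simp
qed

lemma mem_JG_by_reduction:
  assumes n: "n \<ge> 1" and R: "R (Suc n) = (x, y, z)"
    and f: "phi f = Uq * Us * K + x * \<alpha> + y * \<beta>1 + z * \<beta>2"
    and "reducible \<alpha> (\<beta>1 + swap_r \<beta>2)"
  shows "f \<in> JG n"
proof -
  obtain A B C a c i where
    cx: "2 * (\<alpha> + swap_r \<alpha>) + Us * phi A - 2 * phi B = Cst a * Ub ^ i" and
    cy: "2 * (\<beta>1 + swap_r \<beta>2) + (Ur2 - Ub) * phi B - phi C = Cst c * Uq" and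
    cz: "2 * swap_r (\<beta>1 + swap_r \<beta>2) + (Ur1 - Ub) * phi B - phi C = Cst c * Uq" and
    ic: "i = 0 \<and> c = 0 \<or> i = 1"
    using \<open>reducible \<alpha> (\<beta>1 + swap_r \<beta>2)\<close> unfolding reducible_def by blast
  obtain X Y Z where G: "G (Suc n) = (X, Y, Z)"
    by (cases "G (Suc n)")
  let ?F = "A * X + B * Y + C * Z"
  note residue = residue_vanishes[OF R phi_reduction_congruent[OF G R f cx cy cz]]
  \<comment> \<open>For n = 1 the two relations between a and c are dependent, but then b^3 lies in (G_2).\<close>
  have "a = 0 \<or> i = 1 \<and> n = 1"
    using ic residue(2,3) n residue_relations_imp_zero[of n a c] by (cases "n = 1") auto
  then have "Cst a * Vb ^ (i + Suc n) \<in> JG n"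
    using Vb_cube_mem_JG_1 by (auto simp: JG_def ideal_gen_0 ideal_gen_mult numeral_3_eq_3)
  moreover have "?F \<in> JG n"
    unfolding mem_JG_iff[OF G] by blast
  ultimately have "?F + Cst a * Vb ^ (i + Suc n) \<in> JG n"
    using ideal_gen_add unfolding JG_def by blast
  moreover have "?F + Cst a * Vb ^ (i + Suc n) = Cst 4 * f"
    using residue(1) by (simp add: diff_eq_eq add.commute)
  ultimately have "Cst 4 * f \<in> JG n"
    by simp
  then show ?thesis
    unfolding JG_def by (rule ideal_gen_cancel_Cst) simp
qed

definition mon2 :: "nat \<Rightarrow> nat \<Rightarrow> nat \<Rightarrow> nat \<Rightarrow> V2 \<Rightarrow>\<^sub>0 nat" where
  "mon2 i j k l = Poly_Mapping.single ub i + Poly_Mapping.single uq j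
     + Poly_Mapping.single ur1 k + Poly_Mapping.single ur2 l"

lemma lookup_mon2 [simp]:
  "Poly_Mapping.lookup (mon2 i j k l) ub = i" "Poly_Mapping.lookup (mon2 i j k l) uq = j"
  "Poly_Mapping.lookup (mon2 i j k l) ur1 = k" "Poly_Mapping.lookup (mon2 i j k l) ur2 = l"
  by (simp_all add: mon2_def lookup_add lookup_single)

lemma mon2_lookup:
  "m = mon2 (Poly_Mapping.lookup m ub) (Poly_Mapping.lookup m uq)
         (Poly_Mapping.lookup m ur1) (Poly_Mapping.lookup m ur2)"
  by (rule poly_mapping_eqI, rename_tac v, case_tac v) simp_all

lemma mon2_eq_iff [simp]: "mon2 i j k l = mon2 i' j' k' l' \<longleftrightarrow> i = i' \<and> j = j' \<and> k = k' \<and> l = l'"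
  by (metis lookup_mon2)

lemma wdeg_mon2: "wdeg w2 (mon2 i j k l) = i + 2 * j + k + l"
proof -
  have "Poly_Mapping.keys (mon2 i j k l) \<subseteq> {ub, uq, ur1, ur2}"
    by (intro subsetI, rename_tac v, case_tac v) simp_all
  then show ?thesis
    by (simp add: wdeg_superset[of "{ub, uq, ur1, ur2}"])
qed

lemma single_mon2:
  "Poly_Mapping.single (mon2 i j k l) c = Cst c * Ub ^ i * Uq ^ j * Ur1 ^ k * Ur2 ^ l"
  by (simp add: Var_power Cst_def mult_single mon2_def)

lemma homogeneous_w2_eq_sum:
  assumes "homogeneous w2 d p" "finite M" "\<And>i j k l. i + 2 * j + k + l = d \<Longrightarrow> mon2 i j k l \<in> M"
  shows "p = (\<Sum>m\<in>M. Poly_Mapping.single m (Poly_Mapping.lookup p m))"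
  using assms(1,2)
proof (rule homogeneous_eq_sum_single)
  fix m
  assume "wdeg w2 m = d"
  then show "m \<in> M"
    using assms(3) mon2_lookup[of m] wdeg_mon2 by metis
qed

lemma homogeneous_w2_0:
  fixes p :: P2
  assumes "homogeneous w2 0 p"
  obtains g where "p = Cst g"
proof -
  have "p = (\<Sum>m\<in>{mon2 0 0 0 0}. Poly_Mapping.single m (Poly_Mapping.lookup p m))"
    by (rule homogeneous_w2_eq_sum[OF assms]) simp_all
  also have "\<dots> = Cst (Poly_Mapping.lookup p (mon2 0 0 0 0))"
    by (simp add: single_mon2)
  finally show ?thesis
    by (rule that)
qed

lemma homogeneous_w2_1:
  fixes p :: P2
  assumes "homogeneous w2 1 p"
  obtains g1 g2 g3 where "p = Cst g1 * Ub + Cst g2 * Ur1 + Cst g3 * Ur2"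
proof -
  have "p = (\<Sum>m\<in>{mon2 1 0 0 0, mon2 0 0 1 0, mon2 0 0 0 1}.
      Poly_Mapping.single m (Poly_Mapping.lookup p m))"
    by (rule homogeneous_w2_eq_sum[OF assms]) (simp_all, presburger)
  then show ?thesis
    using that by (simp add: single_mon2 add.assoc)
qed

lemma homogeneous_w2_2:
  fixes p :: P2
  assumes "homogeneous w2 2 p"
  obtains g1 g2 g3 g4 g5 g6 g7 where
    "p = Cst g1 * Ub ^ 2 + Cst g2 * Uq + Cst g3 * Ur1 ^ 2 + Cst g4 * Ur2 ^ 2
       + Cst g5 * Ub * Ur1 + Cst g6 * Ub * Ur2 + Cst g7 * Ur1 * Ur2"
proof -
  have "p = (\<Sum>m\<in>{mon2 2 0 0 0, mon2 0 1 0 0, mon2 0 0 2 0, mon2 0 0 0 2,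
        mon2 1 0 1 0, mon2 1 0 0 1, mon2 0 0 1 1}.
      Poly_Mapping.single m (Poly_Mapping.lookup p m))"
    by (rule homogeneous_w2_eq_sum[OF assms]) (simp_all, presburger)
  then show ?thesis
    using that by (simp add: single_mon2 add.assoc)
qed

lemma reducible_deg0: "reducible (Cst a) (Cst g)"
proof -
  have "2 * (Cst a + swap_r (Cst a)) + Us * phi 0 - 2 * phi 0 = Cst (4 * a) * Ub ^ 0"
    by (simp add: Cst_mult)
  moreover have "2 * Cst g + (Ur2 - Ub) * phi 0 - phi (Cst (2 * g)) = Cst 0 * Uq"
    and "2 * swap_r (Cst g) + (Ur1 - Ub) * phi 0 - phi (Cst (2 * g)) = Cst 0 * Uq"
    by (simp_all add: Cst_mult)
  ultimately show ?thesis
    unfolding reducible_def by blast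
qed

lemma reducible_deg1:
  "reducible (Cst a) (Cst g1 * Ub + Cst g2 * Ur1 + Cst g3 * Ur2)"
proof -
  let ?B = "Cst (2 * (g2 - g3)) :: P1"
  let ?C = "Cst (2 * g1 + 2 * (g2 + g3)) * Vb + Cst (2 * g2) * Vt"
  have "2 * (Cst a + swap_r (Cst a)) + Us * phi 0 - 2 * phi ?B = Cst (4 * a - 4 * (g2 - g3)) * Ub ^ 0"
    by (simp add: Cst_mult Cst_diff)
  moreover have "2 * (Cst g1 * Ub + Cst g2 * Ur1 + Cst g3 * Ur2) + (Ur2 - Ub) * phi ?B - phi ?C = Cst 0 * Uq"
    by (simp add: Cst_add Cst_mult Cst_diff algebra_simps)
  moreover have "2 * swap_r (Cst g1 * Ub + Cst g2 * Ur1 + Cst g3 * Ur2) + (Ur1 - Ub) * phi ?B - phi ?C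
      = Cst 0 * Uq"
    by (simp add: Cst_add Cst_mult Cst_diff algebra_simps)
  ultimately show ?thesis
    unfolding reducible_def by blast
qed

lemma reducible_deg2:
  "reducible (Cst a1 * Ub + Cst a2 * Ur1 + Cst a3 * Ur2)
     (Cst g1 * Ub ^ 2 + Cst g2 * Uq + Cst g3 * Ur1 ^ 2 + Cst g4 * Ur2 ^ 2
      + Cst g5 * Ub * Ur1 + Cst g6 * Ub * Ur2 + Cst g7 * Ur1 * Ur2)"
    (is "reducible ?\<alpha> ?\<beta>")
proof -
  define p where "p = 2 * (a2 + a3) - 4 * (g3 - g4)"
  define E where "E = Cst (g3 - g4) * (Vt + 2 * Vb) + Cst (g5 - g6) * Vb"
  define C where "C = Cst (2 * g1) * Vb ^ 2 + Cst (g3 + g4) * (Vt ^ 2 + 2 * Vb * Vt + 2 * Vb ^ 2 + 2 * Vk)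
    + Cst (g5 + g6) * (Vb * Vt + 2 * Vb ^ 2) + Cst (2 * g7) * (Vb ^ 2 + Vb * Vt - Vk) + E * Vt"
  have "2 * (?\<alpha> + swap_r ?\<alpha>) + Us * phi (Cst (- p)) - 2 * phi (2 * E)
      = Cst (4 * a1 - 4 * (g5 - g6) + 4 * p) * Ub ^ 1"
    by (simp add: E_def p_def Cst_add Cst_mult Cst_diff Cst_uminus) algebra
  moreover have "2 * ?\<beta> + (Ur2 - Ub) * phi (2 * E) - phi C = Cst (2 * g2 - 8 * (g3 + g4) + 8 * g7) * Uq"
    by (simp add: C_def E_def Cst_add Cst_mult Cst_diff) algebra
  moreover have "2 * swap_r ?\<beta> + (Ur1 - Ub) * phi (2 * E) - phi C
      = Cst (2 * g2 - 8 * (g3 + g4) + 8 * g7) * Uq"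
    by (simp add: C_def E_def Cst_add Cst_mult Cst_diff) algebra
  ultimately show ?thesis
    unfolding reducible_def by blast
qed

lemma reducible_if_homogeneous:
  assumes "homogeneous w2 (e - 1) \<alpha>" and "homogeneous w2 e \<beta>" and "e \<le> 2"
  shows "reducible \<alpha> \<beta>"
proof -
  consider "e = 0" | "e = 1" | "e = 2"
    using \<open>e \<le> 2\<close> by linarith
  then show ?thesis
  proof cases
    case 1
    with assms have "homogeneous w2 0 \<alpha>" "homogeneous w2 0 \<beta>"
      by simp_all
    then obtain a g where "\<alpha> = Cst a" "\<beta> = Cst g"
      by (elim homogeneous_w2_0)
    then show ?thesis
      by (simp add: reducible_deg0)
  next
    case 2
    with assms have "homogeneous w2 0 \<alpha>" "homogeneous w2 1 \<beta>"
      by simp_all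
    then obtain a g1 g2 g3 where "\<alpha> = Cst a" "\<beta> = Cst g1 * Ub + Cst g2 * Ur1 + Cst g3 * Ur2"
      by (elim homogeneous_w2_0 homogeneous_w2_1)
    then show ?thesis
      by (simp add: reducible_deg1)
  next
    case 3
    with assms have "homogeneous w2 1 \<alpha>" "homogeneous w2 2 \<beta>"
      by simp_all
    then obtain a1 a2 a3 g1 g2 g3 g4 g5 g6 g7 where
      "\<alpha> = Cst a1 * Ub + Cst a2 * Ur1 + Cst a3 * Ur2"
      "\<beta> = Cst g1 * Ub ^ 2 + Cst g2 * Uq + Cst g3 * Ur1 ^ 2 + Cst g4 * Ur2 ^ 2
         + Cst g5 * Ub * Ur1 + Cst g6 * Ub * Ur2 + Cst g7 * Ur1 * Ur2"
      by (elim homogeneous_w2_1 homogeneous_w2_2)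
    then show ?thesis
      by (simp add: reducible_deg2)
  qed
qed

lemma mem_JG_if_phi_mem_IR:
  assumes n: "n \<ge> 1" and "d \<le> n + 2" and f: "homogeneous w1 d f" and "phi f \<in> IR n"
  shows "f \<in> JG n"
proof -
  obtain x y z where R: "R (Suc n) = (x, y, z)"
    by (cases "R (Suc n)")
  then have x: "homogeneous w2 (Suc n) x" and y: "homogeneous w2 n y" and z: "homogeneous w2 n z"
    using homogeneous_R by blast+
  obtain c0 c1 c2 c3 where c: "phi f = Uq * Us * c0 + x * c1 + y * c2 + z * c3"
    using \<open>phi f \<in> IR n\<close> unfolding mem_IR_iff[OF R] by blast
  have "homogeneous w2 3 (Uq * Us)"
    by (rule homogeneous_mult[OF homogeneous_Uq homogeneous_Us]) simp
  then obtain K where K: "homogeneous_part w2 d (Uq * Us * c0) = Uq * Us * K"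
    by (rule homogeneous_part_mult)
  obtain \<alpha> where \<alpha>: "homogeneous w2 (d - Suc n) \<alpha>" "homogeneous_part w2 d (x * c1) = x * \<alpha>"
    using x by (rule homogeneous_part_mult)
  obtain \<beta>1 where \<beta>1: "homogeneous w2 (d - n) \<beta>1" "homogeneous_part w2 d (y * c2) = y * \<beta>1"
    using y by (rule homogeneous_part_mult)
  obtain \<beta>2 where \<beta>2: "homogeneous w2 (d - n) \<beta>2" "homogeneous_part w2 d (z * c3) = z * \<beta>2"
    using z by (rule homogeneous_part_mult)
  have "phi f = homogeneous_part w2 d (phi f)"
    using homogeneous_part_homogeneous[OF homogeneous_phi[OF f]] by simp
  also have "\<dots> = Uq * Us * K + x * \<alpha> + y * \<beta>1 + z * \<beta>2"
    by (simp add: c homogeneous_part_add K \<alpha> \<beta>1 \<beta>2)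
  finally have decomposition: "phi f = Uq * Us * K + x * \<alpha> + y * \<beta>1 + z * \<beta>2" .
  have "reducible \<alpha> (\<beta>1 + swap_r \<beta>2)"
    using \<open>d \<le> n + 2\<close> \<alpha> \<beta>1 \<beta>2
    by (intro reducible_if_homogeneous[where e = "d - n"]) (simp_all add: homogeneous_add homogeneous_swap_r)
  with n R decomposition show ?thesis
    by (rule mem_JG_by_reduction)
qed

theorem lemma4p29:
  fixes n :: nat
  assumes "n \<ge> 1"
  shows "(\<forall>f g. phi (f + g) = phi f + phi g \<and> phi (f * g) = phi f * phi g)
       \<and> phi 1 = 1
       \<and> (\<forall>c. phi (Cst c) = Cst c)
       \<and> (\<forall>d f. homogeneous w1 d f \<longrightarrow> homogeneous w2 d (phi f))
       \<and> phi ` JG n \<subseteq> IR n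
       \<and> (\<forall>d f. d \<le> n + 2 \<longrightarrow> homogeneous w1 d f \<longrightarrow> phi f \<in> IR n \<longrightarrow> f \<in> JG n)"
  using homogeneous_phi phi_JG_subset_IR mem_JG_if_phi_mem_IR[OF assms] by simp

end
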